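(* Let $\mathfrak{g}$ be a basic Lie superalgebra with $\mathfrak{g}\ne\mathfrak{psl}(n|n)$, or $\mathfrak{g}=\mathfrak{gl}(m|n)$. Let $\mathfrak{g}=\bigoplus_j\mathfrak{g}(j)$ be a good $\mathbb{Z}$-grading for $e\in\mathfrak{g}_{\bar0}(2)$ (with $\mathfrak{Z}(\mathfrak{g}_{\bar0})\subset\mathfrak{g}(0)$ when $\mathfrak{g}=\mathfrak{gl}(m|n)$), defined by $\mathrm{ad}\,H$ with $H\in\mathfrak{g}_{\bar0}(0)$, i.e. $[H,x]=jx$ for $x\in\mathfrak{g}(j)$. If $\mathfrak{s}=\{e,f,h\}$ is an $\mathfrak{sl}_2$-triple with $f\in\mathfrak{g}'_{\bar0}(-2)$ and $h\in\mathfrak{g}'_{\bar0}(0)$, then $z:=H-h$ lies in the even part of the center of $\mathfrak{g}^{\mathfrak s}$, i.e. $z\in\mathfrak{Z}(\mathfrak{g}^{\mathfrak s})_{\bar0}$. In particular, if $\mathfrak{Z}(\mathfrak{g}^{\mathfrak s})_{\bar0}=0$, then the Dynkin grading (eigenspaces of $\mathrm{ad}\,h$) is the only good $\mathbb{Z}$-grading for which $e$ is a good element.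
   Context: Basic Lie superalgebra: finite-dimensional simple $\mathfrak{g}=\mathfrak{g}_{\bar0}\oplus\mathfrak{g}_{\bar1}$ with $\mathfrak{g}_{\bar0}$ reductive and an even nondegenerate invariant bilinear form. $\mathfrak{g}'_{\bar0}=[\mathfrak{g}_{\bar0},\mathfrak{g}_{\bar0}]$, $\mathfrak{g}'_{\bar0}(j)=\mathfrak{g}'_{\bar0}\cap\mathfrak{g}(j)$. Good grading/good element: $e\in\mathfrak{g}_{\bar0}(2)$ with $\mathrm{ad}\,e:\mathfrak{g}(j)\to\mathfrak{g}(j+2)$ injective for $j\le-1$, surjective for $j\ge-1$. $\mathfrak{sl}_2$-triple: $[e,f]=h,[h,e]=2e,[h,f]=-2f$. $\mathfrak{g}^{\mathfrak s}$ is the common centralizer of $e,f,h$ and $\mathfrak{Z}(\mathfrak{g}^{\mathfrak s})$ its center. *)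

theory Defs
  imports Complex_Main
begin

text \<open>A superalgebra structure is given by a complex vector space structure
  (scalar multiplication sc on the carrier type 'a, which is the whole algebra g),
  a bracket br, and the even and odd parts G0, G1.\<close>

definition homog :: "'a set \<Rightarrow> 'a set \<Rightarrow> 'a \<Rightarrow> bool" where
  "homog G0 G1 x \<longleftrightarrow> x \<in> G0 \<or> x \<in> G1"

definition ssign :: "'a set \<Rightarrow> 'a \<Rightarrow> 'a \<Rightarrow> complex" where
  "ssign G1 x y = (if x \<in> G1 \<and> y \<in> G1 then -1 else 1)"

definition bracket_bilinear :: "(complex \<Rightarrow> 'a::ab_group_add \<Rightarrow> 'a) \<Rightarrow> ('a \<Rightarrow> 'a \<Rightarrow> 'a) \<Rightarrow> bool" where
  "bracket_bilinear sc br \<longleftrightarrow>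
     (\<forall>x y z. br (x + y) z = br x z + br y z) \<and>
     (\<forall>x y z. br x (y + z) = br x y + br x z) \<and>
     (\<forall>c x y. br (sc c x) y = sc c (br x y)) \<and>
     (\<forall>c x y. br x (sc c y) = sc c (br x y))"

definition lie_superalgebra ::
  "(complex \<Rightarrow> 'a::ab_group_add \<Rightarrow> 'a) \<Rightarrow> ('a \<Rightarrow> 'a \<Rightarrow> 'a) \<Rightarrow> 'a set \<Rightarrow> 'a set \<Rightarrow> bool" where
  "lie_superalgebra sc br G0 G1 \<longleftrightarrow>
     vector_space sc \<and>
     (\<exists>B. finite B \<and> module.span sc B = UNIV) \<and>
     module.subspace sc G0 \<and> module.subspace sc G1 \<and>
     G0 \<inter> G1 = {0} \<and> (\<forall>x. \<exists>a\<in>G0. \<exists>b\<in>G1. x = a + b) \<and>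
     bracket_bilinear sc br \<and>
     (\<forall>x\<in>G0. \<forall>y\<in>G0. br x y \<in> G0) \<and> (\<forall>x\<in>G0. \<forall>y\<in>G1. br x y \<in> G1) \<and>
     (\<forall>x\<in>G1. \<forall>y\<in>G0. br x y \<in> G1) \<and> (\<forall>x\<in>G1. \<forall>y\<in>G1. br x y \<in> G0) \<and>
     (\<forall>x y. homog G0 G1 x \<longrightarrow> homog G0 G1 y \<longrightarrow>
        br x y = - sc (ssign G1 x y) (br y x)) \<and>
     (\<forall>x y z. homog G0 G1 x \<longrightarrow> homog G0 G1 y \<longrightarrow> homog G0 G1 z \<longrightarrow>
        br x (br y z) = br (br x y) z + sc (ssign G1 x y) (br y (br x z)))"

definition graded_ideal ::
  "(complex \<Rightarrow> 'a::ab_group_add \<Rightarrow> 'a) \<Rightarrow> ('a \<Rightarrow> 'a \<Rightarrow> 'a) \<Rightarrow> 'a set \<Rightarrow> 'a set \<Rightarrow> 'a set \<Rightarrow> bool" where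
  "graded_ideal sc br G0 G1 I \<longleftrightarrow>
     module.subspace sc I \<and> (\<forall>x. \<forall>y\<in>I. br x y \<in> I) \<and>
     (\<forall>y\<in>I. \<exists>a\<in>I \<inter> G0. \<exists>b\<in>I \<inter> G1. y = a + b)"

definition simple_lsa ::
  "(complex \<Rightarrow> 'a::ab_group_add \<Rightarrow> 'a) \<Rightarrow> ('a \<Rightarrow> 'a \<Rightarrow> 'a) \<Rightarrow> 'a set \<Rightarrow> 'a set \<Rightarrow> bool" where
  "simple_lsa sc br G0 G1 \<longleftrightarrow>
     (\<exists>x y. br x y \<noteq> 0) \<and>
     (\<forall>I. graded_ideal sc br G0 G1 I \<longrightarrow> I = {0} \<or> I = UNIV)"

definition even_ideal ::
  "(complex \<Rightarrow> 'a::ab_group_add \<Rightarrow> 'a) \<Rightarrow> ('a \<Rightarrow> 'a \<Rightarrow> 'a) \<Rightarrow> 'a set \<Rightarrow> 'a set \<Rightarrow> bool" where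
  "even_ideal sc br G0 I \<longleftrightarrow> module.subspace sc I \<and> I \<subseteq> G0 \<and> (\<forall>x\<in>G0. \<forall>y\<in>I. br x y \<in> I)"

primrec derived_series ::
  "(complex \<Rightarrow> 'a::ab_group_add \<Rightarrow> 'a) \<Rightarrow> ('a \<Rightarrow> 'a \<Rightarrow> 'a) \<Rightarrow> 'a set \<Rightarrow> nat \<Rightarrow> 'a set" where
  "derived_series sc br S 0 = S"
| "derived_series sc br S (Suc k) =
     module.span sc {br x y | x y. x \<in> derived_series sc br S k \<and> y \<in> derived_series sc br S k}"

definition solvable_sub ::
  "(complex \<Rightarrow> 'a::ab_group_add \<Rightarrow> 'a) \<Rightarrow> ('a \<Rightarrow> 'a \<Rightarrow> 'a) \<Rightarrow> 'a set \<Rightarrow> bool" where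
  "solvable_sub sc br S \<longleftrightarrow> (\<exists>k. derived_series sc br S k = {0})"

definition center_even :: "('a \<Rightarrow> 'a \<Rightarrow> 'a::zero) \<Rightarrow> 'a set \<Rightarrow> 'a set" where
  "center_even br G0 = {x \<in> G0. \<forall>y\<in>G0. br x y = 0}"

text \<open>g0 reductive: its radical (largest solvable ideal) equals its centre, i.e.
  every solvable ideal of g0 is central (the centre is itself a solvable ideal).\<close>
definition reductive_even ::
  "(complex \<Rightarrow> 'a::ab_group_add \<Rightarrow> 'a) \<Rightarrow> ('a \<Rightarrow> 'a \<Rightarrow> 'a) \<Rightarrow> 'a set \<Rightarrow> bool" where
  "reductive_even sc br G0 \<longleftrightarrow>
     (\<forall>I. even_ideal sc br G0 I \<and> solvable_sub sc br I \<longrightarrow> I \<subseteq> center_even br G0)"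

definition even_nondeg_invariant_form ::
  "(complex \<Rightarrow> 'a::ab_group_add \<Rightarrow> 'a) \<Rightarrow> ('a \<Rightarrow> 'a \<Rightarrow> 'a) \<Rightarrow> 'a set \<Rightarrow> 'a set
   \<Rightarrow> ('a \<Rightarrow> 'a \<Rightarrow> complex) \<Rightarrow> bool" where
  "even_nondeg_invariant_form sc br G0 G1 B \<longleftrightarrow>
     (\<forall>x y z. B (x + y) z = B x z + B y z) \<and>
     (\<forall>x y z. B x (y + z) = B x y + B x z) \<and>
     (\<forall>c x y. B (sc c x) y = c * B x y) \<and>
     (\<forall>c x y. B x (sc c y) = c * B x y) \<and>
     (\<forall>x\<in>G0. \<forall>y\<in>G1. B x y = 0 \<and> B y x = 0) \<and>
     (\<forall>x y z. B (br x y) z = B x (br y z)) \<and>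
     (\<forall>x. (\<forall>y. B x y = 0) \<longrightarrow> x = 0)"

definition basic_lsa ::
  "(complex \<Rightarrow> 'a::ab_group_add \<Rightarrow> 'a) \<Rightarrow> ('a \<Rightarrow> 'a \<Rightarrow> 'a) \<Rightarrow> 'a set \<Rightarrow> 'a set \<Rightarrow> bool" where
  "basic_lsa sc br G0 G1 \<longleftrightarrow>
     lie_superalgebra sc br G0 G1 \<and> simple_lsa sc br G0 G1 \<and> reductive_even sc br G0 \<and>
     (\<exists>B. even_nondeg_invariant_form sc br G0 G1 B)"

text \<open>(m+n) x (m+n) complex matrices, indices 0..m+n-1, zero outside; the
  first m indices are even, the last n odd.\<close>
definition mat_space :: "nat \<Rightarrow> nat \<Rightarrow> (nat \<Rightarrow> nat \<Rightarrow> complex) set" where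
  "mat_space m n = {X. \<forall>i j. (m + n \<le> i \<or> m + n \<le> j) \<longrightarrow> X i j = 0}"

definition mmul :: "nat \<Rightarrow> (nat \<Rightarrow> nat \<Rightarrow> complex) \<Rightarrow> (nat \<Rightarrow> nat \<Rightarrow> complex) \<Rightarrow> (nat \<Rightarrow> nat \<Rightarrow> complex)" where
  "mmul N X Y = (\<lambda>i j. \<Sum>k<N. X i k * Y k j)"

definition mev :: "nat \<Rightarrow> (nat \<Rightarrow> nat \<Rightarrow> complex) \<Rightarrow> (nat \<Rightarrow> nat \<Rightarrow> complex)" where
  "mev m X = (\<lambda>i j. if (i < m) = (j < m) then X i j else 0)"

definition modd :: "nat \<Rightarrow> (nat \<Rightarrow> nat \<Rightarrow> complex) \<Rightarrow> (nat \<Rightarrow> nat \<Rightarrow> complex)" where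
  "modd m X = (\<lambda>i j. if (i < m) = (j < m) then 0 else X i j)"

text \<open>Supercommutator, extended bilinearly:
  [X,Y] = XY - (Y0 X + Y1 X0 - Y1 X1).\<close>
definition msbr :: "nat \<Rightarrow> nat \<Rightarrow> (nat \<Rightarrow> nat \<Rightarrow> complex) \<Rightarrow> (nat \<Rightarrow> nat \<Rightarrow> complex) \<Rightarrow> (nat \<Rightarrow> nat \<Rightarrow> complex)" where
  "msbr m n X Y = (\<lambda>i j. mmul (m+n) X Y i j - mmul (m+n) (mev m Y) X i j
       - mmul (m+n) (modd m Y) (mev m X) i j + mmul (m+n) (modd m Y) (modd m X) i j)"

definition supertrace :: "nat \<Rightarrow> nat \<Rightarrow> (nat \<Rightarrow> nat \<Rightarrow> complex) \<Rightarrow> complex" where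
  "supertrace m n X = (\<Sum>i<m. X i i) - (\<Sum>i\<in>{m..<m+n}. X i i)"

definition sl_space :: "nat \<Rightarrow> nat \<Rightarrow> (nat \<Rightarrow> nat \<Rightarrow> complex) set" where
  "sl_space m n = {X \<in> mat_space m n. supertrace m n X = 0}"

definition lsa_hom_from_mat ::
  "(complex \<Rightarrow> 'a::ab_group_add \<Rightarrow> 'a) \<Rightarrow> ('a \<Rightarrow> 'a \<Rightarrow> 'a) \<Rightarrow> 'a set \<Rightarrow> 'a set
   \<Rightarrow> nat \<Rightarrow> nat \<Rightarrow> (nat \<Rightarrow> nat \<Rightarrow> complex) set \<Rightarrow> ((nat \<Rightarrow> nat \<Rightarrow> complex) \<Rightarrow> 'a) \<Rightarrow> bool" where
  "lsa_hom_from_mat sc br G0 G1 m n M \<phi> \<longleftrightarrow>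
     (\<forall>X\<in>M. \<forall>Y\<in>M. \<phi> (\<lambda>i j. X i j + Y i j) = \<phi> X + \<phi> Y) \<and>
     (\<forall>c. \<forall>X\<in>M. \<phi> (\<lambda>i j. c * X i j) = sc c (\<phi> X)) \<and>
     (\<forall>X\<in>M. \<forall>Y\<in>M. \<phi> (msbr m n X Y) = br (\<phi> X) (\<phi> Y)) \<and>
     (\<forall>X\<in>M. mev m X = X \<longrightarrow> \<phi> X \<in> G0) \<and>
     (\<forall>X\<in>M. modd m X = X \<longrightarrow> \<phi> X \<in> G1)"

definition iso_gl ::
  "(complex \<Rightarrow> 'a::ab_group_add \<Rightarrow> 'a) \<Rightarrow> ('a \<Rightarrow> 'a \<Rightarrow> 'a) \<Rightarrow> 'a set \<Rightarrow> 'a set \<Rightarrow> nat \<Rightarrow> nat \<Rightarrow> bool" where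
  "iso_gl sc br G0 G1 m n \<longleftrightarrow>
     (\<exists>\<phi>. bij_betw \<phi> (mat_space m n) UNIV \<and> lsa_hom_from_mat sc br G0 G1 m n (mat_space m n) \<phi>)"

text \<open>g is isomorphic to psl(n|n) = sl(n|n)/CI: there is a surjective homomorphism
  sl(n|n) -> g whose kernel is the scalar matrices.\<close>
definition iso_psl ::
  "(complex \<Rightarrow> 'a::ab_group_add \<Rightarrow> 'a) \<Rightarrow> ('a \<Rightarrow> 'a \<Rightarrow> 'a) \<Rightarrow> 'a set \<Rightarrow> 'a set \<Rightarrow> nat \<Rightarrow> bool" where
  "iso_psl sc br G0 G1 n \<longleftrightarrow>
     (\<exists>\<phi>. \<phi> ` sl_space n n = UNIV \<and> lsa_hom_from_mat sc br G0 G1 n n (sl_space n n) \<phi> \<and>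
        (\<forall>X\<in>sl_space n n. \<phi> X = 0 \<longleftrightarrow> (\<exists>c. X = (\<lambda>i j. if i = j \<and> i < n + n then c else 0))))"

definition grade_sp :: "(complex \<Rightarrow> 'a \<Rightarrow> 'a) \<Rightarrow> ('a \<Rightarrow> 'a \<Rightarrow> 'a) \<Rightarrow> 'a \<Rightarrow> int \<Rightarrow> 'a set" where
  "grade_sp sc br H j = {x. br H x = sc (of_int j) x}"

definition Z_grading_by ::
  "(complex \<Rightarrow> 'a::ab_group_add \<Rightarrow> 'a) \<Rightarrow> ('a \<Rightarrow> 'a \<Rightarrow> 'a) \<Rightarrow> 'a set \<Rightarrow> 'a \<Rightarrow> bool" where
  "Z_grading_by sc br G0 H \<longleftrightarrow>
     H \<in> G0 \<and> H \<in> grade_sp sc br H 0 \<and>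
     module.span sc (\<Union>j. grade_sp sc br H j) = UNIV"

definition good_element ::
  "(complex \<Rightarrow> 'a::ab_group_add \<Rightarrow> 'a) \<Rightarrow> ('a \<Rightarrow> 'a \<Rightarrow> 'a) \<Rightarrow> 'a set \<Rightarrow> 'a \<Rightarrow> 'a \<Rightarrow> bool" where
  "good_element sc br G0 H e \<longleftrightarrow>
     e \<in> G0 \<and> e \<in> grade_sp sc br H 2 \<and>
     (\<forall>j\<le>-1. inj_on (br e) (grade_sp sc br H j)) \<and>
     (\<forall>j\<ge>-1. br e ` grade_sp sc br H j = grade_sp sc br H (j + 2))"

definition derived_even :: "(complex \<Rightarrow> 'a::ab_group_add \<Rightarrow> 'a) \<Rightarrow> ('a \<Rightarrow> 'a \<Rightarrow> 'a) \<Rightarrow> 'a set \<Rightarrow> 'a set" where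
  "derived_even sc br G0 = module.span sc {br x y | x y. x \<in> G0 \<and> y \<in> G0}"

definition sl2_triple :: "(complex \<Rightarrow> 'a \<Rightarrow> 'a) \<Rightarrow> ('a \<Rightarrow> 'a \<Rightarrow> 'a) \<Rightarrow> 'a \<Rightarrow> 'a \<Rightarrow> 'a \<Rightarrow> bool" where
  "sl2_triple sc br e f h \<longleftrightarrow> br e f = h \<and> br h e = sc 2 e \<and> br h f = sc (-2) f"

definition centralizer_s :: "('a \<Rightarrow> 'a \<Rightarrow> 'a::zero) \<Rightarrow> 'a \<Rightarrow> 'a \<Rightarrow> 'a \<Rightarrow> 'a set" where
  "centralizer_s br e f h = {x. br x e = 0 \<and> br x f = 0 \<and> br x h = 0}"

definition center_of :: "('a \<Rightarrow> 'a \<Rightarrow> 'a::zero) \<Rightarrow> 'a set \<Rightarrow> 'a set" where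
  "center_of br S = {x \<in> S. \<forall>y\<in>S. br x y = 0}"

end

theory Submission
  imports Defs
begin

(* Only the even part of g enters: on even elements the super-identities are the ordinary
   antisymmetry and Jacobi identities, so ad e, ad f, ad h give an sl(2)-action on g, and
   ad of an even element of degree k shifts degrees by k.
   By construction z commutes with e, f, h; the real claim is that every y in g^s has
   degree 0, so that [H,y] = [h,y] = 0.  Split y into homogeneous components, each again
   killed by e, f, h.  Components of negative degree vanish since ad e is injective there.
   For a component v of positive degree j, surjectivity of ad e : g(j-2) -> g(j) and a
   finite-dimensional linear-algebra argument give a preimage w of h-weight -2; since f
   kills e w = v and f is nilpotent (finitely many degrees occur), the classical sl(2)
   computation e f^(k+1) w = -(k+1)(k+2) f^k w forces w = 0, hence v = 0. *)

lemma (in finite_dimensional_vector_space) injective_endomorphism_onto: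
  assumes W: "subspace W" and lin: "Vector_Spaces.linear scale scale g"
    and into: "g ` W \<subseteq> W" and inj: "inj_on g W"
  shows "g ` W = W"
proof
  interpret g: Vector_Spaces.linear scale scale g by fact
  obtain B where B: "B \<subseteq> W" "independent B" "W \<subseteq> span B" "card B = dim W"
    using basis_exists[of W] by blast
  have span_B: "span B = W"
    using B(1,3) W by (simp add: span_subspace)
  have "W \<subseteq> span (g ` B)"
  proof (rule card_ge_dim_independent)
    show "g ` B \<subseteq> W" using B(1) into by blast
    show "independent (g ` B)"
      using g.independent_injective_image[OF B(2)] inj span_B by metis
    show "dim W \<le> card (g ` B)"
      using B(1,4) inj by (simp add: card_image inj_on_subset)
  qed
  then show "W \<subseteq> g ` W" by (simp add: g.span_image span_B)
qed fact

locale lsa =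
  fixes sc :: "complex \<Rightarrow> 'a::ab_group_add \<Rightarrow> 'a" and br :: "'a \<Rightarrow> 'a \<Rightarrow> 'a"
    and G0 G1 :: "'a set"
  assumes lsa: "lie_superalgebra sc br G0 G1"

sublocale lsa \<subseteq> vector_space sc
  using lsa unfolding lie_superalgebra_def by blast

context lsa
begin

lemma br_bilinear: "bracket_bilinear sc br"
  using lsa unfolding lie_superalgebra_def by blast

lemma br_add_left: "br (x + y) z = br x z + br y z"
  and br_add_right: "br x (y + z) = br x y + br x z"
  and br_scale_left: "br (sc c x) y = sc c (br x y)"
  and br_scale_right: "br x (sc c y) = sc c (br x y)"
  using br_bilinear unfolding bracket_bilinear_def by blast+

lemma br_zero_left [simp]: "br 0 z = 0"
  using br_add_left[of 0 0 z] by simp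

lemma br_zero_right [simp]: "br z 0 = 0"
  using br_add_right[of z 0 0] by simp

lemma br_minus_left [simp]: "br (- x) z = - br x z"
  using br_add_left[of "- x" x z] by (simp add: eq_neg_iff_add_eq_0)

lemma br_diff_left: "br (x - y) z = br x z - br y z"
  using br_add_left[of "x - y" y z] by (simp add: eq_diff_eq)

lemma br_diff_right: "br z (x - y) = br z x - br z y"
  using br_add_right[of z "x - y" y] by (simp add: eq_diff_eq)

lemma br_sum_right: "br x (sum g A) = (\<Sum>a\<in>A. br x (g a))"
  by (induction A rule: infinite_finite_induct) (simp_all add: br_add_right)

lemma even_subspace: "subspace G0"
  using lsa unfolding lie_superalgebra_def by blast

lemma even_bracket_closed: "x \<in> G0 \<Longrightarrow> y \<in> G0 \<Longrightarrow> br x y \<in> G0"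
  using lsa unfolding lie_superalgebra_def by blast

lemma derived_even_subset: "derived_even sc br G0 \<subseteq> G0"
  unfolding derived_even_def
  using even_subspace even_bracket_closed by (intro span_minimal) auto

text \<open>Every element is the sum of an even and an odd one; a nonzero even element has the
  sign +1 against everything, so the super-identities restricted to an even first argument
  are the ordinary antisymmetry and Jacobi identities.\<close>

lemma even_odd_decomposition: obtains a b where "a \<in> G0" "b \<in> G1" "x = a + b"
  using lsa unfolding lie_superalgebra_def by blast

lemma super_antisym:
  "homog G0 G1 x \<Longrightarrow> homog G0 G1 y \<Longrightarrow> br x y = - sc (ssign G1 x y) (br y x)"
  using lsa unfolding lie_superalgebra_def by blast

lemma super_jacobi:
  "homog G0 G1 x \<Longrightarrow> homog G0 G1 y \<Longrightarrow> homog G0 G1 z \<Longrightarrow>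
     br x (br y z) = br (br x y) z + sc (ssign G1 x y) (br y (br x z))"
  using lsa unfolding lie_superalgebra_def by blast

lemma even_sign:
  assumes "u \<in> G0" "u \<noteq> 0" shows "ssign G1 u y = 1"
proof -
  have "G0 \<inter> G1 = {0}" using lsa unfolding lie_superalgebra_def by blast
  with assms have "u \<notin> G1" by blast
  then show ?thesis by (simp add: ssign_def)
qed

lemma even_antisym:
  assumes u: "u \<in> G0" shows "br u y = - br y u"
proof (cases "u = 0")
  case False
  obtain a b where a: "a \<in> G0" and b: "b \<in> G1" and y: "y = a + b"
    by (rule even_odd_decomposition)
  have "br u c = - br c u" if "homog G0 G1 c" for c
    using super_antisym[of u c] u that even_sign[OF u False] by (simp add: homog_def)
  then have "br u a = - br a u" "br u b = - br b u"
    using a b by (simp_all add: homog_def)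
  then show ?thesis by (simp add: y br_add_left br_add_right)
qed simp

lemma even_self_bracket:
  assumes u: "u \<in> G0" shows "br u u = 0"
proof -
  have "br u u + br u u = 0"
    using even_antisym[OF u, of u] by (simp only: eq_neg_iff_add_eq_0)
  then have "sc 2 (br u u) = 0"
    using scale_left_distrib[of 1 1 "br u u"] by simp
  then show ?thesis by simp
qed

lemma even_jacobi:
  assumes x: "x \<in> G0" and y: "y \<in> G0"
  shows "br x (br y z) = br (br x y) z + br y (br x z)"
proof (cases "x = 0")
  case False
  obtain a b where a: "a \<in> G0" and b: "b \<in> G1" and z: "z = a + b"
    by (rule even_odd_decomposition)
  have "br x (br y c) = br (br x y) c + br y (br x c)" if "homog G0 G1 c" for c
    using super_jacobi[of x y c] x y that even_sign[OF x False] by (simp add: homog_def)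
  then have "br x (br y a) = br (br x y) a + br y (br x a)"
    and "br x (br y b) = br (br x y) b + br y (br x b)"
    using a b by (simp_all add: homog_def)
  then show ?thesis
    by (simp add: z br_add_right)
qed simp

lemma finite_spanning_set: obtains B where "finite B" "span B = UNIV"
  using lsa unfolding lie_superalgebra_def by blast

lemma finite_dimensional: obtains Basis where "finite_dimensional_vector_space sc Basis"
proof -
  obtain B where B: "finite B" "span B = UNIV"
    by (rule finite_spanning_set)
  obtain Basis where Basis: "independent Basis" "UNIV \<subseteq> span Basis"
    using basis_exists[of UNIV] by blast
  have "finite Basis"
    using independent_span_bound[OF B(1) Basis(1)] B(2) by auto
  with Basis show thesis
    by (intro that) (unfold_locales, auto)
qed

end

locale graded_lsa = lsa +
  fixes H :: 'a
  assumes grading: "Z_grading_by sc br G0 H"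
begin

abbreviation gr :: "int \<Rightarrow> 'a set" where "gr j \<equiv> grade_sp sc br H j"

lemma grade_iff: "x \<in> gr j \<longleftrightarrow> br H x = sc (of_int j) x"
  unfolding grade_sp_def by simp

lemma grade_subspace: "subspace (gr j)"
  by (rule subspaceI) (auto simp: grade_iff br_add_right br_scale_right scale_right_distrib)

lemma H_even: "H \<in> G0"
  using grading unfolding Z_grading_by_def by blast

lemma bracket_shifts_degree:
  assumes a: "a \<in> G0" "a \<in> gr k" and v: "v \<in> gr j"
  shows "br a v \<in> gr (j + k)"
  using even_jacobi[OF H_even a(1), of v] a(2) v
  by (simp add: grade_iff br_scale_left br_scale_right scale_left_distrib add.commute)

lemma graded_sum_zero:
  assumes "finite J" and "inj_on \<phi> J" and "\<forall>j\<in>J. x j \<in> gr (\<phi> j)" and "sum x J = 0"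
  shows "\<forall>j\<in>J. x j = 0"
  using assms
proof (induction J arbitrary: x rule: finite_induct)
  case (insert j0 J)
  have sum0: "x j0 + sum x J = 0" using insert by simp
  have "br H (x j0 + sum x J) = 0" using sum0 by simp
  then have s1: "sc (of_int (\<phi> j0)) (x j0) + (\<Sum>j\<in>J. sc (of_int (\<phi> j)) (x j)) = 0"
    using insert.prems by (simp add: br_add_right br_sum_right grade_iff)
  have s2: "sc (of_int (\<phi> j0)) (x j0) + (\<Sum>j\<in>J. sc (of_int (\<phi> j0)) (x j)) = 0"
    using arg_cong[OF sum0, of "sc (of_int (\<phi> j0))"]
    by (simp add: scale_right_distrib scale_sum_right)
  define y where "y j = sc (of_int (\<phi> j - \<phi> j0)) (x j)" for j
  have "sum y J = (\<Sum>j\<in>J. sc (of_int (\<phi> j)) (x j)) - (\<Sum>j\<in>J. sc (of_int (\<phi> j0)) (x j))"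
    by (simp add: y_def scale_left_diff_distrib sum_subtractf)
  also have "\<dots> = 0" using s1 s2 by (metis add_left_cancel diff_self)
  finally have "sum y J = 0" .
  moreover have "\<forall>j\<in>J. y j \<in> gr (\<phi> j)"
    using insert.prems grade_subspace unfolding y_def by (simp add: subspace_scale)
  ultimately have "\<forall>j\<in>J. y j = 0" using insert.IH insert.prems by auto
  then have xJ: "\<forall>j\<in>J. x j = 0"
    using insert.prems insert.hyps by (auto simp: y_def inj_on_def)
  then show ?case using sum0 by simp
qed simp

definition occurring_degrees :: "int set" where
  "occurring_degrees = {j. \<exists>v\<in>gr j. v \<noteq> 0}"

lemma finite_occurring_degrees: "finite occurring_degrees"
proof (rule ccontr)
  assume inf: "infinite occurring_degrees"
  obtain B where B: "finite B" "span B = UNIV"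
    by (rule finite_spanning_set)
  obtain S where S: "S \<subseteq> occurring_degrees" "finite S" "card S = Suc (card B)"
    using infinite_arbitrarily_large[OF inf] by blast
  define v where "v j = (SOME w. w \<in> gr j \<and> w \<noteq> 0)" for j
  have v: "v j \<in> gr j \<and> v j \<noteq> 0" if "j \<in> occurring_degrees" for j
  proof -
    have "\<exists>w. w \<in> gr j \<and> w \<noteq> 0" using that unfolding occurring_degrees_def by blast
    then show ?thesis unfolding v_def by (rule someI_ex)
  qed
  have inj: "inj_on v S"
  proof (rule inj_onI)
    fix a b assume ab: "a \<in> S" "b \<in> S" "v a = v b"
    then have "sc (of_int a) (v a) = sc (of_int b) (v a)"
      using v S(1) grade_iff by (metis subsetD)
    then show "a = b" using v ab(1) S(1) scale_cancel_right by force
  qed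
  have "independent (v ` S)"
  proof (rule independent_if_scalars_zero)
    show "finite (v ` S)" using S by simp
  next
    fix u x assume sum: "(\<Sum>x\<in>v ` S. sc (u x) x) = 0" and x: "x \<in> v ` S"
    have "(\<Sum>j\<in>S. sc (u (v j)) (v j)) = 0" using sum by (simp add: sum.reindex[OF inj])
    moreover have "\<forall>j\<in>S. sc (u (v j)) (v j) \<in> gr (id j)"
      using v S(1) grade_subspace by (auto intro: subspace_scale)
    ultimately have "\<forall>j\<in>S. sc (u (v j)) (v j) = 0"
      using graded_sum_zero[OF S(2), of id "\<lambda>j. sc (u (v j)) (v j)"] by simp
    then show "u x = 0" using x v S(1) by auto
  qed
  then have "card (v ` S) \<le> card B" using independent_span_bound[OF B(1)] B(2) by auto
  then show False using S card_image[OF inj] by simp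
qed

lemma graded_decomposition: obtains x where "\<forall>j. x j \<in> gr j" "v = sum x occurring_degrees"
proof -
  define S where "S = {v. \<exists>x. (\<forall>j. x j \<in> gr j) \<and> v = sum x occurring_degrees}"
  have "subspace S"
  proof (rule subspaceI)
    show "0 \<in> S" unfolding S_def
      by (rule CollectI, rule exI[of _ "\<lambda>_. 0"]) (simp add: subspace_0[OF grade_subspace])
  next
    fix a b assume "a \<in> S" "b \<in> S"
    then obtain xa xb where "\<forall>j. xa j \<in> gr j" "a = sum xa occurring_degrees"
        "\<forall>j. xb j \<in> gr j" "b = sum xb occurring_degrees"
      unfolding S_def by blast
    then show "a + b \<in> S" unfolding S_def
      by (intro CollectI exI[of _ "\<lambda>j. xa j + xb j"])
        (simp add: subspace_add[OF grade_subspace] sum.distrib)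
  next
    fix c a assume "a \<in> S"
    then obtain xa where "\<forall>j. xa j \<in> gr j" "a = sum xa occurring_degrees"
      unfolding S_def by blast
    then show "sc c a \<in> S" unfolding S_def
      by (intro CollectI exI[of _ "\<lambda>j. sc c (xa j)"])
        (simp add: subspace_scale[OF grade_subspace] scale_sum_right)
  qed
  moreover have "(\<Union>j. gr j) \<subseteq> S"
  proof
    fix w assume "w \<in> (\<Union>j. gr j)"
    then obtain j0 where w: "w \<in> gr j0" by blast
    show "w \<in> S"
    proof (cases "w = 0")
      case True then show ?thesis using subspace_0[OF \<open>subspace S\<close>] by simp
    next
      case False
      then have "j0 \<in> occurring_degrees" using w unfolding occurring_degrees_def by blast
      then show ?thesis unfolding S_def
        using w subspace_0[OF grade_subspace] finite_occurring_degrees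
        by (intro CollectI exI[of _ "\<lambda>j. if j = j0 then w else 0"]) simp
    qed
  qed
  ultimately have "span (\<Union>j. gr j) \<subseteq> S" by (rule span_minimal[rotated])
  moreover have "span (\<Union>j. gr j) = UNIV"
    using grading unfolding Z_grading_by_def by blast
  ultimately show thesis using that unfolding S_def by blast
qed

lemma bracket_kills_components:
  assumes a: "a \<in> G0" "a \<in> gr k" and x: "\<forall>j. x j \<in> gr j"
    and kill: "br a (sum x occurring_degrees) = 0" and j: "j \<in> occurring_degrees"
  shows "br a (x j) = 0"
  using graded_sum_zero[OF finite_occurring_degrees, of "\<lambda>j. j + k" "\<lambda>j. br a (x j)"]
    bracket_shifts_degree[OF a] x kill j
  by (simp add: br_sum_right inj_on_def)

text \<open>Only finitely many degrees occur, so an even element of negative degree acts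
  nilpotently on every homogeneous vector.\<close>

lemma degree_lowering_nilpotent:
  assumes a: "a \<in> G0" "a \<in> gr k" and k: "k < 0" and v: "v \<in> gr m"
  obtains n where "(br a ^^ n) v = 0"
proof -
  have power_degree: "(br a ^^ n) v \<in> gr (m + int n * k)" for n
  proof (induction n)
    case (Suc n)
    then show ?case
      using bracket_shifts_degree[OF a Suc.IH] by (simp add: algebra_simps)
  qed (simp add: v)
  define M where "M = Min (insert 0 occurring_degrees)"
  have below: "w = 0" if "j < M" "w \<in> gr j" for j w
    using that finite_occurring_degrees unfolding M_def occurring_degrees_def by fastforce
  define n where "n = nat (m - M) + 1"
  have "int n * k \<le> int n * (-1)"
    using k by (intro mult_left_mono) simp_all
  moreover have "int n \<ge> m - M + 1" unfolding n_def by simp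
  ultimately have "m + int n * k < M" by linarith
  then show thesis
    using that below power_degree by blast
qed

end

lemma minus_two_not_Nat: "(-2 :: complex) \<notin> \<nat>"
proof
  assume "(-2 :: complex) \<in> \<nat>"
  then obtain n where "(-2 :: complex) = of_nat n" by (rule Nats_cases)
  then have "Re (-2) = Re (of_nat n)" by simp
  then show False by simp
qed

locale good_sl2_triple = graded_lsa +
  fixes e f h :: 'a
  assumes good: "good_element sc br G0 H e"
    and triple: "sl2_triple sc br e f h"
    and f_even: "f \<in> G0" and f_degree: "f \<in> gr (-2)"
    and h_even: "h \<in> G0" and h_degree: "h \<in> gr 0"
begin

lemma e_even: "e \<in> G0" and e_degree: "e \<in> gr 2"
  using good unfolding good_element_def by blast+

lemma e_f: "br e f = h" and h_e: "br h e = sc 2 e" and h_f: "br h f = sc (-2) f"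
  using triple unfolding sl2_triple_def by blast+

lemma e_f_commute: "br e (br f v) = br h v + br f (br e v)"
  using even_jacobi[OF e_even f_even, of v] by (simp add: e_f)

lemma h_f_commute: "br h (br f v) = sc (-2) (br f v) + br f (br h v)"
  using even_jacobi[OF h_even f_even, of v] by (simp add: h_f br_scale_left)

lemma h_e_commute: "br h (br e v) = sc 2 (br e v) + br e (br h v)"
  using even_jacobi[OF h_even e_even, of v] by (simp add: h_e br_scale_left)

lemma h_weight_f_power:
  assumes hu: "br h u = sc c u"
  shows "br h ((br f ^^ k) u) = sc (c - 2 * of_nat k) ((br f ^^ k) u)"
proof (induction k)
  case (Suc k)
  have "br h ((br f ^^ Suc k) u)
      = sc (-2) ((br f ^^ Suc k) u) + sc (c - 2 * of_nat k) ((br f ^^ Suc k) u)"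
    by (simp add: h_f_commute Suc br_scale_right)
  also have "\<dots> = sc (-2 + (c - 2 * of_nat k)) ((br f ^^ Suc k) u)"
    by (simp only: scale_left_distrib)
  also have "-2 + (c - 2 * of_nat k) = c - 2 * of_nat (Suc k)"
    by simp
  finally show ?case .
qed (simp add: hu)

lemma e_f_power:
  assumes hu: "br h u = sc c u" and feu: "br f (br e u) = 0"
  shows "br e ((br f ^^ Suc k) u) = sc (of_nat (Suc k) * (c - of_nat k)) ((br f ^^ k) u)"
proof (induction k)
  case 0
  then show ?case using hu feu by (simp add: e_f_commute)
next
  case (Suc k)
  have "br e ((br f ^^ Suc (Suc k)) u)
      = br h ((br f ^^ Suc k) u) + br f (br e ((br f ^^ Suc k) u))"
    by (simp add: e_f_commute)
  also have "\<dots> = sc (c - 2 * of_nat (Suc k)) ((br f ^^ Suc k) u)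
      + sc (of_nat (Suc k) * (c - of_nat k)) ((br f ^^ Suc k) u)"
    by (simp only: h_weight_f_power[OF hu] Suc br_scale_right) (simp only: funpow.simps comp_def)
  also have "\<dots> = sc (c - 2 * of_nat (Suc k) + of_nat (Suc k) * (c - of_nat k))
      ((br f ^^ Suc k) u)"
    by (simp only: scale_left_distrib)
  also have "c - 2 * of_nat (Suc k) + of_nat (Suc k) * (c - of_nat k)
      = of_nat (Suc (Suc k)) * (c - of_nat (Suc k))"
    by (simp add: algebra_simps)
  finally show ?case .
qed

text \<open>Hence a homogeneous vector whose h-weight is not a natural number, and whose image
  under e is killed by f, must vanish: f is nilpotent on it, and climbing back with e
  multiplies by nonzero scalars.\<close>

lemma weight_vector_vanishes:
  assumes hu: "br h u = sc c u" and c: "c \<notin> \<nat>" and feu: "br f (br e u) = 0"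
    and u: "u \<in> gr m"
  shows "u = 0"
proof -
  obtain n where n: "(br f ^^ n) u = 0"
    using degree_lowering_nilpotent[OF f_even f_degree _ u] by auto
  have "(br f ^^ k) u = 0 \<Longrightarrow> u = 0" for k
  proof (induction k)
    case (Suc k)
    have "c - of_nat k \<noteq> 0"
      using c of_nat_in_Nats by force
    then have "of_nat (Suc k) * (c - of_nat k) \<noteq> 0"
      using of_nat_neq_0 by simp
    moreover have "sc (of_nat (Suc k) * (c - of_nat k)) ((br f ^^ k) u) = 0"
      using e_f_power[OF hu feu, of k] Suc.prems by simp
    ultimately show ?case using Suc.IH by simp
  qed simp
  then show ?thesis using n .
qed

text \<open>Surjectivity of ad e onto positive degrees, corrected by an element of ker(ad e):
  the operator ad h + 2 is injective on ker(ad e) \<inter> g(j-2) (a kernel vector would be a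
  vanishing weight vector of weight -2), hence onto by finite dimensionality, and this
  lets us choose the preimage of an h-invariant vector to have h-weight -2.\<close>

lemma weight_minus_two_preimage:
  assumes v: "v \<in> gr j" and j: "j \<ge> 1" and hv: "br h v = 0"
  obtains w where "w \<in> gr (j - 2)" "br e w = v" "br h w = sc (-2) w"
proof -
  have "br e ` gr (j - 2) = gr (j - 2 + 2)"
    using good j unfolding good_element_def by simp
  then obtain w where w: "w \<in> gr (j - 2)" "br e w = v"
    using v by (metis diff_add_cancel imageE)
  define W where "W = {u. br e u = 0} \<inter> gr (j - 2)"
  define \<Phi> where "\<Phi> u = br h u + sc 2 u" for u
  have W_subspace: "subspace W"
    unfolding W_def
    by (intro subspace_inter grade_subspace subspaceI) (auto simp: br_add_right br_scale_right)
  have \<Phi>_linear: "Vector_Spaces.linear sc sc \<Phi>"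
    unfolding Vector_Spaces.linear_iff \<Phi>_def using vector_space_axioms
    by (simp add: br_add_right br_scale_right scale_right_distrib)
  have \<Phi>_diff: "\<Phi> (a - b) = \<Phi> a - \<Phi> b" for a b
    unfolding \<Phi>_def by (simp add: br_diff_right scale_right_diff_distrib)
  have \<Phi>_degree: "\<Phi> u \<in> gr m" if "u \<in> gr m" for u m
    unfolding \<Phi>_def using bracket_shifts_degree[OF h_even h_degree that]
    by (intro subspace_add[OF grade_subspace] subspace_scale[OF grade_subspace] that) simp
  have e_\<Phi>: "br e (\<Phi> u) = br h (br e u)" for u
    using h_e_commute[of u] by (simp add: \<Phi>_def br_add_right br_scale_right algebra_simps)
  have \<Phi>_W: "\<Phi> ` W \<subseteq> W"
    unfolding W_def using e_\<Phi> \<Phi>_degree by auto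
  have \<Phi>_kernel: "u = 0" if "u \<in> W" "\<Phi> u = 0" for u
  proof (rule weight_vector_vanishes)
    show "br h u = sc (-2) u"
      using that(2) unfolding \<Phi>_def by (simp add: add_eq_0_iff)
    show "(-2 :: complex) \<notin> \<nat>" by (rule minus_two_not_Nat)
    show "br f (br e u) = 0" "u \<in> gr (j - 2)" using that(1) unfolding W_def by auto
  qed
  have "inj_on \<Phi> W"
  proof (rule inj_onI)
    fix a b assume ab: "a \<in> W" "b \<in> W" "\<Phi> a = \<Phi> b"
    then have "\<Phi> (a - b) = 0"
      by (simp add: \<Phi>_diff)
    then have "a - b = 0"
      using \<Phi>_kernel subspace_diff[OF W_subspace ab(1,2)] by blast
    then show "a = b" by simp
  qed
  moreover obtain Basis where "finite_dimensional_vector_space sc Basis"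
    by (rule finite_dimensional)
  ultimately have "\<Phi> ` W = W"
    using finite_dimensional_vector_space.injective_endomorphism_onto
      [OF _ W_subspace \<Phi>_linear \<Phi>_W] by blast
  moreover have "\<Phi> w \<in> W"
    unfolding W_def using e_\<Phi>[of w] w hv \<Phi>_degree by auto
  ultimately obtain u where u: "u \<in> W" "\<Phi> u = \<Phi> w" by (metis imageE)
  show thesis
  proof
    show "w - u \<in> gr (j - 2)"
      using u(1) w(1) subspace_diff[OF grade_subspace] unfolding W_def by blast
    show "br e (w - u) = v"
      using u(1) w(2) unfolding W_def by (simp add: br_diff_right)
    have "\<Phi> (w - u) = 0"
      using u(2) by (simp add: \<Phi>_diff)
    then show "br h (w - u) = sc (-2) (w - u)"
      unfolding \<Phi>_def by (simp add: add_eq_0_iff)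
  qed
qed

lemma positive_degree_invariant_vanishes:
  assumes v: "v \<in> gr j" and j: "j \<ge> 1" and fv: "br f v = 0" and hv: "br h v = 0"
  shows "v = 0"
proof -
  obtain w where w: "w \<in> gr (j - 2)" "br e w = v" "br h w = sc (-2) w"
    using weight_minus_two_preimage[OF v j hv] .
  have "w = 0"
    by (rule weight_vector_vanishes[OF w(3) _ _ w(1)]) (simp_all add: w(2) fv minus_two_not_Nat)
  then show ?thesis using w(2) by simp
qed

text \<open>Every element of the centralizer of the triple has degree 0: its components of
  negative degree are killed by the injective map ad e, and those of positive degree by
  the previous lemma.\<close>

lemma centralizer_degree_zero:
  assumes y: "y \<in> centralizer_s br e f h"
  shows "br H y = 0"
proof -
  have ey: "br e y = 0" and fy: "br f y = 0" and hy: "br h y = 0"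
    using y even_antisym[OF e_even, of y] even_antisym[OF f_even, of y]
      even_antisym[OF h_even, of y]
    unfolding centralizer_s_def by simp_all
  obtain x where x: "\<forall>j. x j \<in> gr j" "y = sum x occurring_degrees"
    by (rule graded_decomposition)
  have component_zero: "x j = 0" if j: "j \<in> occurring_degrees" "j \<noteq> 0" for j
  proof (cases "j \<le> -1")
    case True
    then have "inj_on (br e) (gr j)"
      using good unfolding good_element_def by blast
    moreover have "br e (x j) = br e 0"
      using bracket_kills_components[OF e_even e_degree x(1)] ey x(2) j(1) by simp
    ultimately show ?thesis
      using x(1) subspace_0[OF grade_subspace] by (meson inj_onD)
  next
    case False
    show ?thesis
    proof (rule positive_degree_invariant_vanishes)
      show "x j \<in> gr j" "j \<ge> 1" using x(1) False j(2) by auto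
      show "br f (x j) = 0"
        using bracket_kills_components[OF f_even f_degree x(1)] fy x(2) j(1) by simp
      show "br h (x j) = 0"
        using bracket_kills_components[OF h_even h_degree x(1)] hy x(2) j(1) by simp
    qed
  qed
  have "br H y = (\<Sum>j\<in>occurring_degrees. sc (of_int j) (x j))"
    using x by (simp add: br_sum_right grade_iff)
  also have "\<dots> = 0"
    using component_zero by (intro sum.neutral) (metis scale_zero_right of_int_0 scale_zero_left)
  finally show ?thesis .
qed

lemma H_minus_h_central: "H - h \<in> center_of br (centralizer_s br e f h) \<inter> G0"
proof -
  have He: "br H e = sc 2 e" and Hf: "br H f = sc (-2) f" and Hh: "br H h = 0"
    using e_degree f_degree h_degree by (simp_all add: grade_iff)
  have "H - h \<in> centralizer_s br e f h"
    unfolding centralizer_s_def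
    using He Hf Hh h_e h_f even_self_bracket[OF h_even] by (simp add: br_diff_left)
  moreover have "br (H - h) y = 0" if "y \<in> centralizer_s br e f h" for y
    using centralizer_degree_zero[OF that] that even_antisym[OF h_even, of y]
    unfolding centralizer_s_def by (simp add: br_diff_left)
  moreover have "H - h \<in> G0"
    using subspace_diff[OF even_subspace H_even h_even] .
  ultimately show ?thesis
    unfolding center_of_def by blast
qed

end

theorem mainTheorem7:
  fixes sc :: "complex \<Rightarrow> 'a::ab_group_add \<Rightarrow> 'a"
    and br :: "'a \<Rightarrow> 'a \<Rightarrow> 'a"
    and G0 G1 :: "'a set"
    and H e f h :: 'a
  assumes lsa: "lie_superalgebra sc br G0 G1"
    and cases: "(basic_lsa sc br G0 G1 \<and> (\<forall>n. \<not> iso_psl sc br G0 G1 n))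
              \<or> ((\<exists>m n. iso_gl sc br G0 G1 m n) \<and> center_even br G0 \<subseteq> grade_sp sc br H 0)"
    and grading: "Z_grading_by sc br G0 H"
    and good: "good_element sc br G0 H e"
    and triple: "sl2_triple sc br e f h"
    and f_in: "f \<in> derived_even sc br G0 \<inter> grade_sp sc br H (-2)"
    and h_in: "h \<in> derived_even sc br G0 \<inter> grade_sp sc br H 0"
  shows "H - h \<in> center_of br (centralizer_s br e f h) \<inter> G0
       \<and> (center_of br (centralizer_s br e f h) \<inter> G0 = {0} \<longrightarrow> H = h)"
proof -
  have "derived_even sc br G0 \<subseteq> G0"
    using lsa by (rule lsa.derived_even_subset[unfolded lsa_def])
  then interpret good_sl2_triple sc br G0 G1 H e f h
    using lsa grading good triple f_in h_in by unfold_locales auto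
  have z: "H - h \<in> center_of br (centralizer_s br e f h) \<inter> G0"
    by (rule H_minus_h_central)
  moreover have "H = h" if "center_of br (centralizer_s br e f h) \<inter> G0 = {0}"
    using z that by simp
  ultimately show ?thesis by blast
qed

end
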